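(* Let $\mathbb K$ be a field and let $\beta,\gamma,\gamma^*,\varrho,\varrho^*\in\mathbb K$. Assume $q$ is not a root of unity, where $q$ (in the algebraic closure of $\mathbb K$) satisfies $q+q^{-1}=\beta$. Let $T$ be the Tridiagonal algebra over $\mathbb K$ with parameters $\beta,\gamma,\gamma^*,\varrho,\varrho^*$ and standard generators $A,A^*$. Let $V$ be an irreducible finite dimensional $T$-module and assume each of $A,A^*$ is diagonalizable on $V$. Then $A,A^*$ act on $V$ as a TD pair.
   Context: For $\beta,\gamma,\gamma^*,\varrho,\varrho^*\in\mathbb K$, the Tridiagonal algebra $T=T(\beta,\gamma,\gamma^*,\varrho,\varrho^* )$ is the associative $\mathbb K$-algebra with $1$ generated by two symbols $A,A^*$ (the standard generators) subject to the relations $[A,\,A^2A^*-\beta AA^*A+A^*A^2-\gamma(AA^*+A^*A)-\varrho A^*]=0$ and $[A^*,\,A^{*2}A-\beta A^*AA^*+AA^{*2}-\gamma^*(A^*A+AA^* )-\varrho^*A]=0$, where $[r,s]=rs-sr$. A linear map on $V$ is diagonalizable if $V$ is spanned by its eigenspaces (an eigenspace being a nonzero subspace $\{v: Av=\theta v\}$, $\theta\in\mathbb K$). A TD pair on a finite-dimensional nonzero vector space $V$ is an ordered pair $A,A^*$ of linear maps $V\to V$ such that: (a) $A$ and $A^*$ are diagonalizable on $V$; (b) there is an ordering $V_0,\dots,V_d$ of the eigenspaces of $A$ with $A^*V_i\subseteq V_{i-1}+V_i+V_{i+1}$ ($0\le i\le d$, $V_{-1}=V_{d+1}=0$); (c)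 there is an ordering $V^*_0,\dots,V^*_\delta$ of the eigenspaces of $A^*$ with $AV^*_i\subseteq V^*_{i-1}+V^*_i+V^*_{i+1}$ ($0\le i\le\delta$, $V^*_{-1}=V^*_{\delta+1}=0$); (d) the only subspaces $W$ with $AW\subseteq W$, $A^*W\subseteq W$ are $0$ and $V$. *)

theory Defs
  imports "HOL-Analysis.Analysis"
begin

text \<open>A finite-dimensional nonzero vector space over the field 'k is modelled as 'k^'n
  ('n a finite, hence nonempty, index type); linear maps are n x n matrices acting by *v.\<close>

definition mscale :: "'k::field \<Rightarrow> 'k^'n^'m \<Rightarrow> 'k^'n^'m" where
  "mscale c M = (\<chi> i j. c * (M $ i $ j))"

definition comm :: "'k::field^'n^'n \<Rightarrow> 'k^'n^'n \<Rightarrow> 'k^'n^'n" where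
  "comm R S = R ** S - S ** R"

definition TD_relations ::
  "'k::field \<Rightarrow> 'k \<Rightarrow> 'k \<Rightarrow> 'k \<Rightarrow> 'k \<Rightarrow> 'k^'n^'n \<Rightarrow> 'k^'n^'n \<Rightarrow> bool" where
  "TD_relations \<beta> \<gamma> \<gamma>s \<rho> \<rho>s A As \<longleftrightarrow>
     comm A (A ** A ** As - mscale \<beta> (A ** As ** A) + As ** A ** A
             - mscale \<gamma> (A ** As + As ** A) - mscale \<rho> As) = 0 \<and>
     comm As (As ** As ** A - mscale \<beta> (As ** A ** As) + A ** As ** As
             - mscale \<gamma>s (As ** A + A ** As) - mscale \<rho>s A) = 0"

definition espace :: "'k::field^'n^'n \<Rightarrow> 'k \<Rightarrow> ('k^'n) set" where
  "espace A \<theta> = {v. A *v v = \<theta> *s v}"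

definition eigvals :: "'k::field^'n^'n \<Rightarrow> 'k set" where
  "eigvals A = {\<theta>. espace A \<theta> \<noteq> {0}}"

definition diagonalizable :: "'k::field^'n^'n \<Rightarrow> bool" where
  "diagonalizable A \<longleftrightarrow> vec.span (\<Union>\<theta>\<in>eigvals A. espace A \<theta>) = UNIV"

text \<open>No subspace other than 0 and V is invariant under both maps
  (= irreducible T-module, since T is generated by A, A*).\<close>
definition irreducible_pair :: "'k::field^'n^'n \<Rightarrow> 'k^'n^'n \<Rightarrow> bool" where
  "irreducible_pair A As \<longleftrightarrow>
     (\<forall>W. vec.subspace W \<and> (\<lambda>v. A *v v) ` W \<subseteq> W \<and> (\<lambda>v. As *v v) ` W \<subseteq> W
          \<longrightarrow> W = {0} \<or> W = UNIV)"

definition ssum3 :: "('k::field^'n) set \<Rightarrow> ('k^'n) set \<Rightarrow> ('k^'n) set \<Rightarrow> ('k^'n) set" where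
  "ssum3 U V W = {x + y + z | x y z. x \<in> U \<and> y \<in> V \<and> z \<in> W}"

definition tridiagonal_ordering :: "'k::field^'n^'n \<Rightarrow> 'k^'n^'n \<Rightarrow> nat \<Rightarrow> (nat \<Rightarrow> 'k) \<Rightarrow> bool" where
  "tridiagonal_ordering A B d \<theta> \<longleftrightarrow>
     inj_on \<theta> {0..d} \<and> \<theta> ` {0..d} = eigvals A \<and>
     (\<forall>i\<le>d. (\<lambda>v. B *v v) ` espace A (\<theta> i) \<subseteq>
        ssum3 (if 0 < i then espace A (\<theta> (i - 1)) else {0})
              (espace A (\<theta> i))
              (if i < d then espace A (\<theta> (i + 1)) else {0}))"

definition TD_pair :: "'k::field^'n^'n \<Rightarrow> 'k^'n^'n \<Rightarrow> bool" where
  "TD_pair A As \<longleftrightarrow>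
     diagonalizable A \<and> diagonalizable As \<and>
     (\<exists>d \<theta>. tridiagonal_ordering A As d \<theta>) \<and>
     (\<exists>\<delta> \<theta>s. tridiagonal_ordering As A \<delta> \<theta>s) \<and>
     irreducible_pair A As"

definition field_embedding :: "('k::field \<Rightarrow> 'L::field) \<Rightarrow> bool" where
  "field_embedding \<phi> \<longleftrightarrow> \<phi> 1 = 1 \<and> (\<forall>x y. \<phi> (x + y) = \<phi> x + \<phi> y \<and> \<phi> (x * y) = \<phi> x * \<phi> y)"

definition root_of_unity :: "'L::field \<Rightarrow> bool" where
  "root_of_unity q \<longleftrightarrow> (\<exists>n>0. q ^ n = 1)"

end

theory Submission
  imports Defs
begin

text \<open>
  Write V(\<theta>) for the eigenspaces of A and
  P(x, y) = x^2 - \<beta>xy + y^2 - \<gamma>(x + y) - \<rho>.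
  The first relation says that A commutes with
  R = A^2A* - \<beta>AA*A + A*A^2 - \<gamma>(AA* + A*A) - \<rho>A*;
  applied to v in V(\<theta>), this shows that the V(x)-component of A*v is killed by
  (x - \<theta>) P(\<theta>, x). Call two distinct eigenvalues adjacent if P vanishes on them.
  The neighbours of x are roots of the quadratic P(x, -), so there are at most two of them
  and they sum to \<beta>x + \<gamma>; irreducibility makes the graph connected.
  Going around a cycle would give a periodic solution of
  u(k) + u(k+2) = \<beta> u(k+1) + \<gamma>, whose differences are combinations of
  q^k and q^-k; as q is not a root of unity, such a solution is constant.
  Hence the graph is a path, and listing the eigenvalues along it gives the tridiagonal
  ordering; exchanging A and A* gives the one for A*.
\<close>

section \<open>Eigenspace decompositions\<close>

lemma espace_scale: "v \<in> espace A \<theta> \<Longrightarrow> c *s v \<in> espace A \<theta>"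
  by (simp add: espace_def vec.scale vec.scale_scale mult.commute)

lemma espace_add: "v \<in> espace A \<theta> \<Longrightarrow> u \<in> espace A \<theta> \<Longrightarrow> v + u \<in> espace A \<theta>"
  by (simp add: espace_def matrix_vector_right_distrib vec.scale_right_distrib)

lemma zero_in_espace [simp]: "0 \<in> espace A \<theta>"
  by (simp add: espace_def)

lemma eigvalsE:
  assumes "\<theta> \<in> eigvals A"
  obtains v where "v \<in> espace A \<theta>" "v \<noteq> 0"
  using assms zero_in_espace unfolding eigvals_def by blast

lemma sum_eigenvectors_eq_0D:
  fixes A :: "'k::field^'n^'n"
  assumes "finite S" "\<forall>\<theta>\<in>S. w \<theta> \<in> espace A \<theta>" "(\<Sum>\<theta>\<in>S. w \<theta>) = 0"
  shows "\<forall>\<theta>\<in>S. w \<theta> = 0"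
  using assms
proof (induction S arbitrary: w rule: finite_induct)
  case empty
  then show ?case by simp
next
  case (insert a F)
  have sum: "w a + (\<Sum>\<theta>\<in>F. w \<theta>) = 0"
    using insert by simp
  have "a *s w a + (\<Sum>\<theta>\<in>F. \<theta> *s w \<theta>) = A *v (w a + (\<Sum>\<theta>\<in>F. w \<theta>))"
    using insert.prems by (simp add: matrix_vector_right_distrib vec.sum espace_def)
  also have "\<dots> = a *s (w a + (\<Sum>\<theta>\<in>F. w \<theta>))"
    using sum by simp
  finally have "(\<Sum>\<theta>\<in>F. (\<theta> - a) *s w \<theta>) = 0"
    by (simp add: vec.scale_left_diff_distrib sum_subtractf vec.scale_right_distrib
        vec.scale_sum_right)
  moreover have "\<forall>\<theta>\<in>F. (\<theta> - a) *s w \<theta> \<in> espace A \<theta>"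
    using insert.prems espace_scale by blast
  ultimately have "\<forall>\<theta>\<in>F. (\<theta> - a) *s w \<theta> = 0"
    using insert.IH[of "\<lambda>\<theta>. (\<theta> - a) *s w \<theta>"] by blast
  then have "\<forall>\<theta>\<in>F. w \<theta> = 0"
    using insert.hyps by (auto simp: vec.scale_eq_0_iff)
  with sum show ?case
    by simp
qed

lemma finite_eigvals: "finite (eigvals (A :: 'k::field^'n^'n))"
proof -
  obtain v where v: "\<forall>\<theta>\<in>eigvals A. v \<theta> \<in> espace A \<theta> \<and> v \<theta> \<noteq> 0"
    using eigvalsE by metis
  have inj: "inj_on v (eigvals A)"
  proof (rule inj_onI)
    fix x y
    assume xy: "x \<in> eigvals A" "y \<in> eigvals A" "v x = v y"
    have "A *v v x = x *s v x" "A *v v y = y *s v y" "v x \<noteq> 0"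
      using v xy(1,2) by (auto simp: espace_def)
    then have "x *s v x = y *s v x" "v x \<noteq> 0"
      using xy(3) by metis+
    then show "x = y"
      by (simp add: vec.scale_cancel_right)
  qed
  have "vec.independent (v ` eigvals A)"
    unfolding vec.independent_explicit_module
  proof (intro allI impI)
    fix t u x
    assume t: "finite t" "t \<subseteq> v ` eigvals A" "(\<Sum>x\<in>t. u x *s x) = 0" "x \<in> t"
    obtain F where F: "F \<subseteq> eigvals A" "t = v ` F"
      using t(2) by (auto simp: subset_image_iff)
    have injF: "inj_on v F"
      using inj F(1) inj_on_subset by blast
    then have "finite F"
      using t(1) F(2) finite_imageD by blast
    moreover have "(\<Sum>\<theta>\<in>F. u (v \<theta>) *s v \<theta>) = 0"
      using t(3) F(2) injF by (simp add: sum.reindex)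
    ultimately have "\<forall>\<theta>\<in>F. u (v \<theta>) *s v \<theta> = 0"
      using F(1) v espace_scale by (intro sum_eigenvectors_eq_0D) blast+
    then show "u x = 0"
      using t(4) F v by (auto simp: vec.scale_eq_0_iff)
  qed
  then have "finite (v ` eigvals A)"
    by (rule vec.finiteI_independent)
  then show ?thesis
    using inj finite_imageD by blast
qed

lemma span_espaces_decomp:
  fixes A :: "'k::field^'n^'n"
  assumes "finite C" "x \<in> vec.span (\<Union>\<theta>\<in>C. espace A \<theta>)"
  obtains w where "\<forall>\<theta>\<in>C. w \<theta> \<in> espace A \<theta>" "x = (\<Sum>\<theta>\<in>C. w \<theta>)"
proof -
  have "\<exists>w. (\<forall>\<theta>\<in>C. w \<theta> \<in> espace A \<theta>) \<and> x = (\<Sum>\<theta>\<in>C. w \<theta>)"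
    using assms(2)
  proof (induction rule: vec.span_induct_alt)
    case base
    show ?case
      by (rule exI[of _ "\<lambda>_. 0"]) simp
  next
    case (step c x y)
    then obtain w where w: "\<forall>\<theta>\<in>C. w \<theta> \<in> espace A \<theta>" "y = (\<Sum>\<theta>\<in>C. w \<theta>)"
      by blast
    from step obtain \<theta>0 where "\<theta>0 \<in> C" "x \<in> espace A \<theta>0"
      by blast
    with w assms(1) show ?case
      by (intro exI[of _ "\<lambda>\<theta>. (if \<theta> = \<theta>0 then c *s x else 0) + w \<theta>"])
        (auto intro!: espace_add espace_scale simp: sum.distrib)
  qed
  then show ?thesis
    using that by blast
qed

lemma diagonalizable_decomp:
  fixes A :: "'k::field^'n^'n"
  assumes "diagonalizable A"
  obtains w where "\<forall>\<theta>\<in>eigvals A. w \<theta> \<in> espace A \<theta>" "x = (\<Sum>\<theta>\<in>eigvals A. w \<theta>)"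
  using span_espaces_decomp[OF finite_eigvals] assms unfolding diagonalizable_def by blast

lemma diagonalizable_eigvals_nonempty:
  fixes A :: "'k::field^'n^'n"
  assumes "diagonalizable A"
  shows "eigvals A \<noteq> {}"
proof
  assume "eigvals A = {}"
  then have "vec.span ({} :: ('k^'n) set) = UNIV"
    using assms unfolding diagonalizable_def by simp
  then have "((\<chi> i. 1) :: 'k^'n) \<in> {0}"
    by (simp add: vec.span_empty)
  then show False
    by (simp add: vec_eq_iff)
qed

lemma espace_inter_span_espaces:
  fixes A :: "'k::field^'n^'n"
  assumes "finite C" "\<theta> \<notin> C" "v \<in> espace A \<theta>" "v \<in> vec.span (\<Union>x\<in>C. espace A x)"
  shows "v = 0"
proof -
  obtain w where w: "\<forall>x\<in>C. w x \<in> espace A x" "v = (\<Sum>x\<in>C. w x)"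
    using span_espaces_decomp[OF assms(1,4)] by blast
  let ?w = "w(\<theta> := - v)"
  have "(\<Sum>x\<in>C. ?w x) = v"
    using assms(2) w(2) by (auto intro: sum.cong)
  then have "(\<Sum>x\<in>insert \<theta> C. ?w x) = 0"
    using assms(1,2) by simp
  moreover have "\<forall>x\<in>insert \<theta> C. ?w x \<in> espace A x"
    using w(1) assms(2,3) espace_scale[of v A \<theta> "-1"] by auto
  ultimately have "?w \<theta> = 0"
    using sum_eigenvectors_eq_0D[of "insert \<theta> C" ?w A] assms(1) by blast
  then show ?thesis
    by simp
qed

lemma span_matrix_invariant:
  assumes "\<And>g. g \<in> G \<Longrightarrow> M *v g \<in> vec.span G"
  shows "(\<lambda>x. M *v x) ` vec.span G \<subseteq> vec.span G"
proof -
  have "vec.span ((*v) M ` G) \<subseteq> vec.span G"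
    using assms by (intro vec.span_minimal) (auto simp: vec.subspace_span)
  then show ?thesis
    by (simp add: vec.span_image)
qed

lemma span_espaces_invariant:
  "(\<lambda>v. A *v v) ` vec.span (\<Union>x\<in>C. espace A x) \<subseteq> vec.span (\<Union>x\<in>C. espace A x)"
proof (rule span_matrix_invariant)
  fix g
  assume "g \<in> (\<Union>x\<in>C. espace A x)"
  then obtain x where "x \<in> C" "g \<in> espace A x"
    by blast
  then have "A *v g \<in> espace A x"
    using espace_scale[of g A x x] by (simp add: espace_def)
  with \<open>x \<in> C\<close> show "A *v g \<in> vec.span (\<Union>x\<in>C. espace A x)"
    by (auto intro: vec.span_base)
qed

section \<open>The tridiagonal relation\<close>

definition td_relation :: "'k::field \<Rightarrow> 'k \<Rightarrow> 'k \<Rightarrow> 'k^'n^'n \<Rightarrow> 'k^'n^'n \<Rightarrow> bool" where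
  "td_relation \<beta> \<gamma> \<rho> A B \<longleftrightarrow>
     comm A (A ** A ** B - mscale \<beta> (A ** B ** A) + B ** A ** A
             - mscale \<gamma> (A ** B + B ** A) - mscale \<rho> B) = 0"

lemma TD_relations_iff:
  "TD_relations \<beta> \<gamma> \<gamma>s \<rho> \<rho>s A As \<longleftrightarrow> td_relation \<beta> \<gamma> \<rho> A As \<and> td_relation \<beta> \<gamma>s \<rho>s As A"
  by (simp add: TD_relations_def td_relation_def)

definition td_poly :: "'k::field \<Rightarrow> 'k \<Rightarrow> 'k \<Rightarrow> 'k \<Rightarrow> 'k \<Rightarrow> 'k" where
  "td_poly \<beta> \<gamma> \<rho> x y = x * x - \<beta> * x * y + y * y - \<gamma> * (x + y) - \<rho>"

lemma td_poly_commute: "td_poly \<beta> \<gamma> \<rho> x y = td_poly \<beta> \<gamma> \<rho> y x"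
  by (simp add: td_poly_def algebra_simps)

lemma td_poly_roots_sum:
  assumes "td_poly \<beta> \<gamma> \<rho> x a = 0" "td_poly \<beta> \<gamma> \<rho> x b = 0" "a \<noteq> b"
  shows "a + b = \<beta> * x + \<gamma>"
proof -
  have "(a - b) * (a + b - \<beta> * x - \<gamma>) = td_poly \<beta> \<gamma> \<rho> x a - td_poly \<beta> \<gamma> \<rho> x b"
    by (simp add: td_poly_def algebra_simps)
  then have "a + b - \<beta> * x - \<gamma> = 0"
    using assms by simp
  then show ?thesis
    by (simp add: algebra_simps)
qed

definition td_adjacent :: "'k::field \<Rightarrow> 'k \<Rightarrow> 'k \<Rightarrow> 'k \<Rightarrow> 'k \<Rightarrow> bool" where
  "td_adjacent \<beta> \<gamma> \<rho> x y \<longleftrightarrow> x \<noteq> y \<and> td_poly \<beta> \<gamma> \<rho> x y = 0"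

lemma td_adjacent_sym: "td_adjacent \<beta> \<gamma> \<rho> x y \<Longrightarrow> td_adjacent \<beta> \<gamma> \<rho> y x"
  unfolding td_adjacent_def by (metis td_poly_commute)

lemma td_adjacent_irrefl: "\<not> td_adjacent \<beta> \<gamma> \<rho> x x"
  by (simp add: td_adjacent_def)

lemma td_adjacent_neighbours_sum:
  "td_adjacent \<beta> \<gamma> \<rho> x a \<Longrightarrow> td_adjacent \<beta> \<gamma> \<rho> x b \<Longrightarrow> a \<noteq> b \<Longrightarrow> a + b = \<beta> * x + \<gamma>"
  unfolding td_adjacent_def by (blast intro: td_poly_roots_sum)

lemma td_adjacent_degree_le_2:
  assumes "td_adjacent \<beta> \<gamma> \<rho> x a" "td_adjacent \<beta> \<gamma> \<rho> x b" "td_adjacent \<beta> \<gamma> \<rho> x c"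
  shows "a = b \<or> a = c \<or> b = c"
proof (rule ccontr)
  assume "\<not> (a = b \<or> a = c \<or> b = c)"
  then have "a + b = a + c" "b \<noteq> c"
    using td_adjacent_neighbours_sum[OF assms(1,2)] td_adjacent_neighbours_sum[OF assms(1,3)]
    by auto
  then show False
    by simp
qed

lemma matrix_vector_mult_mscale: "mscale c M *v v = c *s (M *v v)"
  by (simp add: vec_eq_iff matrix_vector_mult_def mscale_def sum_distrib_left mult.assoc)

lemma matrix_vector_mult_sum_eigenvectors:
  assumes "\<forall>x\<in>S. w x \<in> espace A x"
  shows "A *v (\<Sum>x\<in>S. c x *s w x) = (\<Sum>x\<in>S. (x * c x) *s w x)"
  using assms
  by (auto simp: vec.sum vec.scale espace_def vec.scale_scale mult.commute intro: sum.cong)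

lemma td_relation_component_eq_0:
  fixes A B :: "'k::field^'n^'n"
  assumes rel: "td_relation \<beta> \<gamma> \<rho> A B"
    and "finite S" and v: "v \<in> espace A \<theta>"
    and w: "\<forall>x\<in>S. w x \<in> espace A x" and Bv: "B *v v = (\<Sum>x\<in>S. w x)"
    and "\<theta>' \<in> S" "\<theta>' \<noteq> \<theta>" "\<not> td_adjacent \<beta> \<gamma> \<rho> \<theta> \<theta>'"
  shows "w \<theta>' = 0"
proof -
  define R where "R = A ** A ** B - mscale \<beta> (A ** B ** A) + B ** A ** A
             - mscale \<gamma> (A ** B + B ** A) - mscale \<rho> B"
  have AR: "A ** R = R ** A"
    using rel unfolding td_relation_def comm_def R_def by simp
  have Av: "A *v v = \<theta> *s v"
    using v by (simp add: espace_def)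
  have Bv': "B *v v = (\<Sum>x\<in>S. 1 *s w x)"
    using Bv by simp
  have "R *v v = A *v (A *v (B *v v)) - (\<beta> * \<theta>) *s (A *v (B *v v)) + (\<theta> * \<theta>) *s (B *v v)
       - \<gamma> *s (A *v (B *v v) + \<theta> *s (B *v v)) - \<rho> *s (B *v v)"
    unfolding R_def
    by (simp add: matrix_vector_mult_diff_rdistrib matrix_vector_mult_add_rdistrib
        matrix_vector_mult_mscale matrix_vector_mul_assoc[symmetric] Av vec.scale vec.scale_scale)
  also have "\<dots> = (\<Sum>x\<in>S. td_poly \<beta> \<gamma> \<rho> \<theta> x *s w x)"
    unfolding Bv' matrix_vector_mult_sum_eigenvectors[OF w]
    by (simp add: td_poly_def vec.scale_sum_right vec.scale_scale sum.distrib sum_subtractf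
        vec.scale_left_diff_distrib vec.scale_left_distrib algebra_simps)
  finally have Rv: "R *v v = (\<Sum>x\<in>S. td_poly \<beta> \<gamma> \<rho> \<theta> x *s w x)" .
  have "A *v (R *v v) = R *v (A *v v)"
    by (simp add: matrix_vector_mul_assoc AR)
  also have "\<dots> = \<theta> *s (R *v v)"
    by (simp add: Av vec.scale)
  finally have "(\<Sum>x\<in>S. (x * td_poly \<beta> \<gamma> \<rho> \<theta> x) *s w x) = (\<Sum>x\<in>S. (\<theta> * td_poly \<beta> \<gamma> \<rho> \<theta> x) *s w x)"
    unfolding Rv matrix_vector_mult_sum_eigenvectors[OF w]
    by (simp add: vec.scale_sum_right vec.scale_scale)
  then have "(\<Sum>x\<in>S. ((x - \<theta>) * td_poly \<beta> \<gamma> \<rho> \<theta> x) *s w x) = 0"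
    by (simp add: algebra_simps vec.scale_left_diff_distrib sum_subtractf)
  then have "\<forall>x\<in>S. ((x - \<theta>) * td_poly \<beta> \<gamma> \<rho> \<theta> x) *s w x = 0"
    using w \<open>finite S\<close> by (intro sum_eigenvectors_eq_0D[where A = A]) (auto intro: espace_scale)
  then show ?thesis
    using assms(6-8) by (auto simp: td_adjacent_def)
qed

lemma td_relation_espace_image:
  fixes A B :: "'k::field^'n^'n"
  assumes "td_relation \<beta> \<gamma> \<rho> A B" "diagonalizable A" "v \<in> espace A \<theta>"
  obtains w where "\<forall>x\<in>eigvals A. w x \<in> espace A x" "B *v v = (\<Sum>x\<in>eigvals A. w x)"
    "\<And>x. x \<in> eigvals A \<Longrightarrow> x \<noteq> \<theta> \<Longrightarrow> \<not> td_adjacent \<beta> \<gamma> \<rho> \<theta> x \<Longrightarrow> w x = 0"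
proof -
  obtain w where w: "\<forall>x\<in>eigvals A. w x \<in> espace A x" "B *v v = (\<Sum>x\<in>eigvals A. w x)"
    using diagonalizable_decomp[OF assms(2)] by metis
  moreover have "w x = 0" if "x \<in> eigvals A" "x \<noteq> \<theta>" "\<not> td_adjacent \<beta> \<gamma> \<rho> \<theta> x" for x
    using td_relation_component_eq_0[OF assms(1) finite_eigvals assms(3) w] that by blast
  ultimately show ?thesis
    using that by blast
qed

section \<open>Graphs of maximal degree two\<close>

definition simple_path :: "('a \<Rightarrow> 'a \<Rightarrow> bool) \<Rightarrow> 'a set \<Rightarrow> 'a list \<Rightarrow> bool" where
  "simple_path adj S xs \<longleftrightarrow> xs \<noteq> [] \<and> distinct xs \<and> set xs \<subseteq> S \<and>
     (\<forall>j. Suc j < length xs \<longrightarrow> adj (xs ! j) (xs ! Suc j))"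

lemma simple_path_snoc:
  assumes "simple_path adj S xs" "y \<in> S" "y \<notin> set xs" "adj (last xs) y"
  shows "simple_path adj S (xs @ [y])"
proof -
  have "adj (xs ! j) y" if "Suc j = length xs" for j
    using assms(4) that by (metis diff_Suc_1 last_conv_nth list.size(3) nat.distinct(1))
  then show ?thesis
    using assms unfolding simple_path_def by (auto simp: nth_append less_Suc_eq)
qed

lemma simple_path_Cons:
  assumes "simple_path adj S xs" "y \<in> S" "y \<notin> set xs" "adj y (hd xs)"
  shows "simple_path adj S (y # xs)"
  using assms unfolding simple_path_def
  by (auto simp: nth_Cons hd_conv_nth split: nat.split)

lemma simple_path_length_le_card:
  "finite S \<Longrightarrow> simple_path adj S xs \<Longrightarrow> length xs \<le> card S"
  unfolding simple_path_def by (metis card_mono distinct_card)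

lemma longest_simple_path_exists:
  assumes "finite S" "x \<in> S"
  obtains xs where "simple_path adj S xs" "\<And>ys. simple_path adj S ys \<Longrightarrow> length ys \<le> length xs"
proof -
  have "simple_path adj S [x]"
    using assms(2) by (simp add: simple_path_def)
  moreover have "\<forall>ys. simple_path adj S ys \<longrightarrow> length ys < Suc (card S)"
    using simple_path_length_le_card[OF assms(1)] by (simp add: less_Suc_eq_le)
  ultimately show ?thesis
    using ex_has_greatest_nat[of "simple_path adj S" "[x]" length] that by blast
qed

locale longest_simple_path =
  fixes adj :: "'a \<Rightarrow> 'a \<Rightarrow> bool" and S :: "'a set" and xs :: "'a list"
  assumes sym: "\<And>x y. adj x y \<Longrightarrow> adj y x"
    and degree_le_2: "\<And>x a b c. adj x a \<Longrightarrow> adj x b \<Longrightarrow> adj x c \<Longrightarrow> a = b \<or> a = c \<or> b = c"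
    and path: "simple_path adj S xs"
    and longest: "\<And>ys. simple_path adj S ys \<Longrightarrow> length ys \<le> length xs"
begin

lemma interior_neighbour:
  assumes "0 < i" "Suc i < length xs" "adj (xs ! i) y"
  shows "y = xs ! (i - 1) \<or> y = xs ! Suc i"
proof -
  have steps: "\<And>j. Suc j < length xs \<Longrightarrow> adj (xs ! j) (xs ! Suc j)" and "distinct xs"
    using path unfolding simple_path_def by auto
  have "adj (xs ! i) (xs ! (i - 1))"
    using steps[of "i - 1"] sym assms(1,2) by simp
  moreover have "adj (xs ! i) (xs ! Suc i)"
    using steps[of i] assms(2) by simp
  moreover have "xs ! (i - 1) \<noteq> xs ! Suc i"
    using \<open>distinct xs\<close> assms(1,2) by (simp add: nth_eq_iff_index_eq)
  ultimately show ?thesis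
    using degree_le_2[OF _ _ assms(3)] by blast
qed

lemma neighbour_in_path:
  assumes "x \<in> set xs" "y \<in> S" "adj x y"
  shows "y \<in> set xs"
proof (rule ccontr)
  assume y: "y \<notin> set xs"
  obtain i where i: "i < length xs" "x = xs ! i"
    using assms(1) by (metis in_set_conv_nth)
  consider "i = 0" | "Suc i = length xs" | "0 < i" "Suc i < length xs"
    using i(1) by linarith
  then show False
  proof cases
    case 1
    then have "simple_path adj S (y # xs)"
      using path assms(2,3) y i sym by (intro simple_path_Cons) (auto simp: hd_conv_nth)
    then show False
      using longest by fastforce
  next
    case 2
    then have "last xs = x"
      using i(2) by (metis diff_Suc_1 last_conv_nth list.size(3) nat.distinct(1))
    then have "simple_path adj S (xs @ [y])"
      using path assms(2,3) y by (intro simple_path_snoc) auto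
    then show False
      using longest by fastforce
  next
    case 3
    then show False
      using interior_neighbour[of i y] assms(3) i y
      by (metis Suc_lessD less_imp_diff_less nth_mem)
  qed
qed

lemma no_chord:
  assumes no_cycle: "3 \<le> length xs \<Longrightarrow> \<not> adj (last xs) (hd xs)"
    and "i < j" "j < length xs" "adj (xs ! i) (xs ! j)"
  shows "j = Suc i"
proof (rule ccontr)
  assume chord: "j \<noteq> Suc i"
  have "distinct xs"
    using path unfolding simple_path_def by simp
  have "i = 0"
  proof (rule ccontr)
    assume "i \<noteq> 0"
    then have "xs ! j = xs ! (i - 1) \<or> xs ! j = xs ! Suc i"
      using interior_neighbour[of i "xs ! j"] assms(2-4) by simp
    then show False
      using \<open>distinct xs\<close> \<open>i \<noteq> 0\<close> assms(2,3) chord by (auto simp: nth_eq_iff_index_eq)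
  qed
  have "Suc j = length xs"
  proof (rule ccontr)
    assume "Suc j \<noteq> length xs"
    then have "xs ! i = xs ! (j - 1) \<or> xs ! i = xs ! Suc j"
      using interior_neighbour[of j "xs ! i"] sym assms(2-4) by simp
    then show False
      using \<open>distinct xs\<close> \<open>Suc j \<noteq> length xs\<close> assms(2,3) chord
      by (auto simp: nth_eq_iff_index_eq)
  qed
  then have "last xs = xs ! j" "hd xs = xs ! i"
    using \<open>i = 0\<close> path unfolding simple_path_def
    by (auto simp: hd_conv_nth) (metis diff_Suc_1 last_conv_nth)
  moreover have "3 \<le> length xs"
    using \<open>Suc j = length xs\<close> \<open>i = 0\<close> assms(2) chord by linarith
  ultimately show False
    using no_cycle assms(4) sym by metis
qed

end

lemma connected_acyclic_degree_le_2_graph_is_path: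
  assumes "finite S" "S \<noteq> {}"
    and sym: "\<And>x y. adj x y \<Longrightarrow> adj y x"
    and irrefl: "\<And>x. \<not> adj x x"
    and degree_le_2: "\<And>x a b c. adj x a \<Longrightarrow> adj x b \<Longrightarrow> adj x c \<Longrightarrow> a = b \<or> a = c \<or> b = c"
    and connected: "\<And>C. C \<subseteq> S \<Longrightarrow> C \<noteq> {} \<Longrightarrow> \<forall>x\<in>C. \<forall>y\<in>S. adj x y \<longrightarrow> y \<in> C \<Longrightarrow> C = S"
    and acyclic: "\<And>xs. simple_path adj S xs \<Longrightarrow> 3 \<le> length xs \<Longrightarrow> \<not> adj (last xs) (hd xs)"
  obtains xs where "distinct xs" "set xs = S"
    "\<And>i j. i < length xs \<Longrightarrow> j < length xs \<Longrightarrow> adj (xs ! i) (xs ! j) \<Longrightarrow> j = Suc i \<or> i = Suc j"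
proof -
  txt \<open>A longest simple path contains all neighbours of its vertices, so it covers S; a chord
    could only join its two ends, which would close a cycle.\<close>
  obtain x where "x \<in> S"
    using assms(2) by blast
  then obtain xs where path: "simple_path adj S xs"
    and longest: "\<And>ys. simple_path adj S ys \<Longrightarrow> length ys \<le> length xs"
    using longest_simple_path_exists[OF assms(1)] by metis
  interpret longest_simple_path adj S xs
    using sym degree_le_2 path longest by unfold_locales auto
  have "set xs = S"
    using path neighbour_in_path by (intro connected) (auto simp: simple_path_def)
  moreover have "j = Suc i \<or> i = Suc j"
    if "i < length xs" "j < length xs" "adj (xs ! i) (xs ! j)" for i j
    using no_chord[OF acyclic[OF path]] that sym irrefl
    by (metis linorder_neqE_nat)
  ultimately show ?thesis
    using that path unfolding simple_path_def by blast
qed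

lemma simple_path_closed_walk:
  assumes "simple_path adj S xs" "adj (last xs) (hd xs)"
  shows "adj (xs ! (k mod length xs)) (xs ! (Suc k mod length xs))"
proof -
  let ?n = "length xs"
  have "xs \<noteq> []"
    using assms(1) by (simp add: simple_path_def)
  show ?thesis
  proof (cases "Suc (k mod ?n) = ?n")
    case True
    then have "k mod ?n = ?n - 1" "Suc k mod ?n = 0"
      by (simp_all add: mod_Suc)
    then show ?thesis
      using assms(2) \<open>xs \<noteq> []\<close> by (simp add: hd_conv_nth last_conv_nth)
  next
    case False
    moreover have "k mod ?n < ?n"
      using \<open>xs \<noteq> []\<close> by simp
    ultimately have "Suc (k mod ?n) < ?n" "Suc k mod ?n = Suc (k mod ?n)"
      by (simp_all add: mod_Suc)
    then show ?thesis
      using assms(1) unfolding simple_path_def by simp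
  qed
qed

lemma distinct_nth_mod_add_2:
  assumes "distinct xs" "3 \<le> length xs"
  shows "xs ! (k mod length xs) \<noteq> xs ! ((k + 2) mod length xs)"
proof
  let ?n = "length xs"
  assume "xs ! (k mod ?n) = xs ! ((k + 2) mod ?n)"
  moreover have "0 < ?n"
    using assms(2) by linarith
  then have "k mod ?n < ?n" "(k + 2) mod ?n < ?n"
    by (simp_all only: mod_less_divisor)
  ultimately have "k mod ?n = (k + 2) mod ?n"
    using assms(1) by (simp add: nth_eq_iff_index_eq)
  then have "?n dvd 2"
    using mod_eq_dvd_iff_nat[of k "k + 2" ?n] by simp
  with assms(2) show False
    by (auto dest: dvd_imp_le)
qed

section \<open>The eigenvalue graph has no cycles\<close>

lemma geometric_periodic_eq_0:
  fixes f :: "nat \<Rightarrow> 'a::field"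
  assumes "\<And>k. f (Suc k) = a * f k" "f n = f 0" "a ^ n \<noteq> 1"
  shows "f 0 = 0"
proof -
  have "f k = a ^ k * f 0" for k
    by (induction k) (simp_all add: assms(1))
  then have "(a ^ n - 1) * f 0 = 0"
    using assms(2) by (metis left_diff_distrib mult_1 right_minus_eq)
  then show ?thesis
    using assms(3) by simp
qed

lemma periodic_recurrence_const:
  fixes x :: "nat \<Rightarrow> 'a::field"
  assumes "q \<noteq> 0" "\<not> root_of_unity q" "0 < n"
    and periodic: "\<And>k. x (k + n) = x k"
    and recurrence: "\<And>k. x k + x (k + 2) = (q + inverse q) * x (k + 1) + c"
  shows "x 1 = x 0"
proof -
  txt \<open>On the differences e the shift E satisfies (E - q)(E - 1/q) = 0. So y = (E - q) e is
    geometric with ratio 1/q and, being periodic, vanishes; then e is geometric with ratio q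
    and vanishes too.\<close>
  define e where "e k = x (Suc k) - x k" for k
  define y where "y k = e (Suc k) - q * e k" for k
  have e_periodic: "e (k + n) = e k" for k
    using periodic[of k] periodic[of "Suc k"] unfolding e_def by simp
  have e_recurrence: "e k + e (k + 2) = (q + inverse q) * e (k + 1)" for k
    using recurrence[of k] recurrence[of "Suc k"] unfolding e_def by (simp add: algebra_simps)
  have "y (Suc k) = inverse q * y k" for k
  proof -
    have "y (Suc k) = e (k + 2) - q * e (k + 1)"
      unfolding y_def by (simp add: numeral_2_eq_2)
    also have "\<dots> = inverse q * e (k + 1) - e k"
      using e_recurrence[of k] by (simp add: algebra_simps)
    also have "\<dots> = inverse q * y k"
      unfolding y_def using \<open>q \<noteq> 0\<close> by (simp add: algebra_simps)
    finally show ?thesis .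
  qed
  moreover have "y n = y 0"
    using e_periodic[of 0] e_periodic[of 1] unfolding y_def by simp
  moreover have "q ^ n \<noteq> 1"
    using assms(2,3) unfolding root_of_unity_def by blast
  ultimately have "y 0 = 0"
    by (intro geometric_periodic_eq_0[of y "inverse q" n]) (simp_all add: power_inverse)
  then have "y k = 0" for k
    using \<open>\<And>k. y (Suc k) = inverse q * y k\<close> by (induction k) auto
  then have "e (Suc k) = q * e k" for k
    unfolding y_def by simp
  then have "e 0 = 0"
    using e_periodic[of 0] \<open>q ^ n \<noteq> 1\<close> by (intro geometric_periodic_eq_0[of e q n]) simp_all
  then show ?thesis
    unfolding e_def by simp
qed

lemma field_embedding_add: "field_embedding \<phi> \<Longrightarrow> \<phi> (a + b) = \<phi> a + \<phi> b"
  and field_embedding_mult: "field_embedding \<phi> \<Longrightarrow> \<phi> (a * b) = \<phi> a * \<phi> b"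
  by (simp_all add: field_embedding_def)

lemma field_embedding_inj:
  assumes "field_embedding \<phi>"
  shows "inj \<phi>"
proof (rule injI)
  fix a b
  assume eq: "\<phi> a = \<phi> b"
  have "\<phi> (a - b) + \<phi> b = \<phi> b"
    using eq field_embedding_add[OF assms, of "a - b" b] by simp
  then have "\<phi> (a - b) = 0"
    by simp
  show "a = b"
  proof (rule ccontr)
    assume "a \<noteq> b"
    then have "\<phi> (a - b) * \<phi> (inverse (a - b)) = 1"
      using assms by (metis field_embedding_def right_inverse right_minus_eq)
    with \<open>\<phi> (a - b) = 0\<close> show False
      by simp
  qed
qed

lemma td_adjacent_acyclic:
  fixes \<phi> :: "'k::field \<Rightarrow> 'L::field"
  assumes "field_embedding \<phi>" "q \<noteq> 0" "q + inverse q = \<phi> \<beta>" "\<not> root_of_unity q"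
    and path: "simple_path (td_adjacent \<beta> \<gamma> \<rho>) S xs" and "3 \<le> length xs"
  shows "\<not> td_adjacent \<beta> \<gamma> \<rho> (last xs) (hd xs)"
proof
  assume "td_adjacent \<beta> \<gamma> \<rho> (last xs) (hd xs)"
  define u where "u k = xs ! (k mod length xs)" for k
  have "distinct xs" "xs \<noteq> []"
    using path by (simp_all add: simple_path_def)
  have step: "td_adjacent \<beta> \<gamma> \<rho> (u k) (u (Suc k))" for k
    unfolding u_def using simple_path_closed_walk[OF path] \<open>td_adjacent \<beta> \<gamma> \<rho> (last xs) (hd xs)\<close> .
  have "u k + u (k + 2) = \<beta> * u (k + 1) + \<gamma>" for k
    using td_adjacent_neighbours_sum[OF td_adjacent_sym[OF step[of k]] step[of "Suc k"]]
      distinct_nth_mod_add_2[OF \<open>distinct xs\<close> assms(6), of k]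
    by (simp add: u_def numeral_2_eq_2)
  txt \<open>q only lives in an extension field, so the recurrence is transported there.\<close>
  then have "\<phi> (u k) + \<phi> (u (k + 2)) = (q + inverse q) * \<phi> (u (k + 1)) + \<phi> \<gamma>" for k
    using assms(3) by (metis field_embedding_add[OF assms(1)] field_embedding_mult[OF assms(1)])
  then have "\<phi> (u 1) = \<phi> (u 0)"
    using assms(2,4) \<open>xs \<noteq> []\<close>
    by (intro periodic_recurrence_const[where n = "length xs"]) (simp_all add: u_def)
  then have "xs ! 1 = xs ! 0"
    using field_embedding_inj[OF assms(1)] assms(6) by (simp add: u_def inj_eq)
  then show False
    using nth_eq_iff_index_eq[OF \<open>distinct xs\<close>, of 1 0] assms(6) \<open>xs \<noteq> []\<close> by simp
qed

section \<open>The eigenvalue graph is a path\<close>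

lemma td_relation_span_espaces_invariant:
  fixes A B :: "'k::field^'n^'n"
  assumes rel: "td_relation \<beta> \<gamma> \<rho> A B" and diag: "diagonalizable A" and "C \<subseteq> eigvals A"
    and closed: "\<forall>x\<in>C. \<forall>y\<in>eigvals A. td_adjacent \<beta> \<gamma> \<rho> x y \<longrightarrow> y \<in> C"
  shows "(\<lambda>v. B *v v) ` vec.span (\<Union>x\<in>C. espace A x) \<subseteq> vec.span (\<Union>x\<in>C. espace A x)"
proof (rule span_matrix_invariant)
  fix g
  assume "g \<in> (\<Union>x\<in>C. espace A x)"
  then obtain x where x: "x \<in> C" and g: "g \<in> espace A x"
    by blast
  obtain w where w: "\<forall>y\<in>eigvals A. w y \<in> espace A y" "B *v g = (\<Sum>y\<in>eigvals A. w y)"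
    and far: "\<And>y. y \<in> eigvals A \<Longrightarrow> y \<noteq> x \<Longrightarrow> \<not> td_adjacent \<beta> \<gamma> \<rho> x y \<Longrightarrow> w y = 0"
    using td_relation_espace_image[OF rel diag g] by blast
  have "\<forall>y\<in>eigvals A - C. w y = 0"
    using far closed x by blast
  then have "B *v g = (\<Sum>y\<in>C. w y)"
    using w(2) sum.mono_neutral_right[OF finite_eigvals \<open>C \<subseteq> eigvals A\<close>] by simp
  also have "\<dots> \<in> vec.span (\<Union>x\<in>C. espace A x)"
    using w(1) \<open>C \<subseteq> eigvals A\<close> by (intro vec.span_sum) (auto intro: vec.span_base)
  finally show "B *v g \<in> vec.span (\<Union>x\<in>C. espace A x)" .
qed

lemma td_relation_eigvals_connected:
  fixes A B :: "'k::field^'n^'n"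
  assumes rel: "td_relation \<beta> \<gamma> \<rho> A B" and irr: "irreducible_pair A B" and diag: "diagonalizable A"
    and C: "C \<subseteq> eigvals A" "C \<noteq> {}"
    and closed: "\<forall>x\<in>C. \<forall>y\<in>eigvals A. td_adjacent \<beta> \<gamma> \<rho> x y \<longrightarrow> y \<in> C"
  shows "C = eigvals A"
proof (rule ccontr)
  assume "C \<noteq> eigvals A"
  then obtain \<theta> where \<theta>: "\<theta> \<in> eigvals A" "\<theta> \<notin> C"
    using C(1) by blast
  define W where "W = vec.span (\<Union>x\<in>C. espace A x)"
  have "vec.subspace W" "(\<lambda>v. A *v v) ` W \<subseteq> W" "(\<lambda>v. B *v v) ` W \<subseteq> W"
    unfolding W_def
    by (rule vec.subspace_span span_espaces_invariant
        td_relation_span_espaces_invariant[OF rel diag C(1) closed])+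
  then have "W = {0} \<or> W = UNIV"
    using irr unfolding irreducible_pair_def by simp
  moreover have "W \<noteq> {0}"
  proof -
    obtain x where "x \<in> C"
      using C(2) by blast
    then obtain v where "v \<in> espace A x" "v \<noteq> 0"
      using C(1) eigvalsE by blast
    then have "v \<in> W"
      unfolding W_def using \<open>x \<in> C\<close> by (auto intro: vec.span_base)
    with \<open>v \<noteq> 0\<close> show ?thesis
      by auto
  qed
  moreover have "W \<noteq> UNIV"
  proof
    assume "W = UNIV"
    obtain v where "v \<in> espace A \<theta>" "v \<noteq> 0"
      using eigvalsE[OF \<theta>(1)] by blast
    moreover have "finite C"
      using C(1) finite_eigvals finite_subset by blast
    moreover have "v \<in> vec.span (\<Union>x\<in>C. espace A x)"
      using \<open>W = UNIV\<close> unfolding W_def by simp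
    ultimately show False
      using espace_inter_span_espaces[OF _ \<theta>(2)] by blast
  qed
  ultimately show False
    by simp
qed

lemma sum_atLeastAtMost_neighbours:
  fixes g :: "nat \<Rightarrow> 'a::comm_monoid_add"
  assumes "i \<le> d" "\<And>j. j \<le> d \<Longrightarrow> j \<noteq> i \<Longrightarrow> Suc j \<noteq> i \<Longrightarrow> j \<noteq> Suc i \<Longrightarrow> g j = 0"
  shows "(\<Sum>j=0..d. g j) = (if 0 < i then g (i - 1) else 0) + g i + (if i < d then g (Suc i) else 0)"
proof -
  have "(\<Sum>j=0..d. g j) = (\<Sum>j=0..d. (if 0 < i \<and> j = i - 1 then g (i - 1) else 0)
      + (if j = i then g i else 0) + (if i < d \<and> j = Suc i then g (Suc i) else 0))"
    using assms by (intro sum.cong) auto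
  moreover have "(\<Sum>j=0..d. if 0 < i \<and> j = i - 1 then g (i - 1) else 0)
      = (if 0 < i then g (i - 1) else 0)"
    using assms(1) by (cases "0 < i") auto
  moreover have "(\<Sum>j=0..d. if i < d \<and> j = Suc i then g (Suc i) else 0)
      = (if i < d then g (Suc i) else 0)"
    by (cases "i < d") auto
  ultimately show ?thesis
    using assms(1) by (simp add: sum.distrib)
qed

lemma td_relation_eigvals_path:
  fixes A B :: "'k::field^'n^'n" and \<phi> :: "'k \<Rightarrow> 'L::field"
  assumes "field_embedding \<phi>" "q \<noteq> 0" "q + inverse q = \<phi> \<beta>" "\<not> root_of_unity q"
    and rel: "td_relation \<beta> \<gamma> \<rho> A B" and irr: "irreducible_pair A B" and diag: "diagonalizable A"
  obtains xs where "distinct xs" "set xs = eigvals A"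
    "\<And>i j. i < length xs \<Longrightarrow> j < length xs \<Longrightarrow> td_adjacent \<beta> \<gamma> \<rho> (xs ! i) (xs ! j)
      \<Longrightarrow> j = Suc i \<or> i = Suc j"
proof (rule connected_acyclic_degree_le_2_graph_is_path[where adj = "td_adjacent \<beta> \<gamma> \<rho>"])
  show "finite (eigvals A)"
    by (rule finite_eigvals)
  show "eigvals A \<noteq> {}"
    using diag by (rule diagonalizable_eigvals_nonempty)
  show "C = eigvals A"
    if "C \<subseteq> eigvals A" "C \<noteq> {}" "\<forall>x\<in>C. \<forall>y\<in>eigvals A. td_adjacent \<beta> \<gamma> \<rho> x y \<longrightarrow> y \<in> C" for C
    using td_relation_eigvals_connected[OF rel irr diag that] .
  show "\<not> td_adjacent \<beta> \<gamma> \<rho> (last xs) (hd xs)"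
    if "simple_path (td_adjacent \<beta> \<gamma> \<rho>) (eigvals A) xs" "3 \<le> length xs" for xs
    using td_adjacent_acyclic[OF assms(1-4) that] .
qed (use td_adjacent_sym td_adjacent_irrefl td_adjacent_degree_le_2 that in blast)+

lemma ssum3I: "z = x + y + w \<Longrightarrow> x \<in> U \<Longrightarrow> y \<in> V \<Longrightarrow> w \<in> W \<Longrightarrow> z \<in> ssum3 U V W"
  unfolding ssum3_def by blast

lemma td_relation_tridiagonal_ordering_of_path:
  fixes A B :: "'k::field^'n^'n"
  assumes rel: "td_relation \<beta> \<gamma> \<rho> A B" and diag: "diagonalizable A"
    and "distinct xs" and set_xs: "set xs = eigvals A"
    and path: "\<And>i j. i < length xs \<Longrightarrow> j < length xs \<Longrightarrow> td_adjacent \<beta> \<gamma> \<rho> (xs ! i) (xs ! j)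
      \<Longrightarrow> j = Suc i \<or> i = Suc j"
    and length_xs: "length xs = Suc d"
  shows "tridiagonal_ordering A B d (nth xs)"
proof -
  have indices: "{0..d} = {..<length xs}"
    using length_xs by (simp add: atLeast0AtMost lessThan_Suc_atMost)
  have inj: "inj_on (nth xs) {0..d}"
    using \<open>distinct xs\<close> indices by (simp add: inj_on_nth)
  have image: "nth xs ` {0..d} = eigvals A"
    using indices set_xs nth_image[of "length xs" xs] by (simp add: atLeast0LessThan)
  show ?thesis
    unfolding tridiagonal_ordering_def
  proof (intro conjI allI impI subsetI inj image)
    fix i z
    assume "i \<le> d" "z \<in> (\<lambda>v. B *v v) ` espace A (xs ! i)"
    then obtain v where v: "v \<in> espace A (xs ! i)" and z: "z = B *v v"
      by blast
    obtain w where w: "\<forall>x\<in>eigvals A. w x \<in> espace A x" "B *v v = (\<Sum>x\<in>eigvals A. w x)"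
      and far: "\<And>x. x \<in> eigvals A \<Longrightarrow> x \<noteq> xs ! i \<Longrightarrow> \<not> td_adjacent \<beta> \<gamma> \<rho> (xs ! i) x \<Longrightarrow> w x = 0"
      using td_relation_espace_image[OF rel diag v] by blast
    have "B *v v = (\<Sum>j=0..d. w (xs ! j))"
      using sum.reindex[OF inj, of w] unfolding image w(2) by (simp add: comp_def)
    also have "\<dots> = (if 0 < i then w (xs ! (i - 1)) else 0) + w (xs ! i)
        + (if i < d then w (xs ! Suc i) else 0)"
    proof (rule sum_atLeastAtMost_neighbours[OF \<open>i \<le> d\<close>])
      fix j
      assume "j \<le> d" "j \<noteq> i" "Suc j \<noteq> i" "j \<noteq> Suc i"
      then have "i < length xs" "j < length xs"
        using \<open>i \<le> d\<close> length_xs by simp_all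
      then show "w (xs ! j) = 0"
        using far[of "xs ! j"] path[of i j] nth_mem[of j xs] set_xs \<open>distinct xs\<close>
          \<open>j \<noteq> i\<close> \<open>j \<noteq> Suc i\<close> \<open>Suc j \<noteq> i\<close>
        by (auto simp: nth_eq_iff_index_eq)
    qed
    finally show "z \<in> ssum3 (if 0 < i then espace A (xs ! (i - 1)) else {0}) (espace A (xs ! i))
        (if i < d then espace A (xs ! (i + 1)) else {0})"
      unfolding z by (rule ssum3I) (use w(1) image \<open>i \<le> d\<close> in auto)
  qed
qed

lemma td_relation_tridiagonal_ordering:
  fixes A B :: "'k::field^'n^'n" and \<phi> :: "'k \<Rightarrow> 'L::field"
  assumes "field_embedding \<phi>" "q \<noteq> 0" "q + inverse q = \<phi> \<beta>" "\<not> root_of_unity q"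
    and rel: "td_relation \<beta> \<gamma> \<rho> A B" and "irreducible_pair A B" and diag: "diagonalizable A"
  shows "\<exists>d \<theta>. tridiagonal_ordering A B d \<theta>"
proof -
  obtain xs where xs: "distinct xs" "set xs = eigvals A"
    "\<And>i j. i < length xs \<Longrightarrow> j < length xs \<Longrightarrow> td_adjacent \<beta> \<gamma> \<rho> (xs ! i) (xs ! j)
      \<Longrightarrow> j = Suc i \<or> i = Suc j"
    using td_relation_eigvals_path[OF assms] by blast
  moreover have "length xs = Suc (length xs - 1)"
    using xs(2) diagonalizable_eigvals_nonempty[OF diag] by (cases xs) auto
  ultimately show ?thesis
    using td_relation_tridiagonal_ordering_of_path[OF rel diag] by blast
qed

lemma irreducible_pair_swap: "irreducible_pair A B \<Longrightarrow> irreducible_pair B A"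
  unfolding irreducible_pair_def by blast

theorem theorem3p9:
  fixes \<beta> \<gamma> \<gamma>s \<rho> \<rho>s :: "'k::field"
    and \<phi> :: "'k \<Rightarrow> 'L::field" and q :: 'L
    and A As :: "'k^'n^'n"
  assumes "field_embedding \<phi>"
    and "q \<noteq> 0" and "q + inverse q = \<phi> \<beta>"
    and "\<not> root_of_unity q"
    and "TD_relations \<beta> \<gamma> \<gamma>s \<rho> \<rho>s A As"
    and "irreducible_pair A As"
    and "diagonalizable A" and "diagonalizable As"
  shows "TD_pair A As"
proof -
  have "td_relation \<beta> \<gamma> \<rho> A As" "td_relation \<beta> \<gamma>s \<rho>s As A"
    using assms(5) by (simp_all add: TD_relations_iff)
  then have "\<exists>d \<theta>. tridiagonal_ordering A As d \<theta>" "\<exists>\<delta> \<theta>s. tridiagonal_ordering As A \<delta> \<theta>s"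
    using td_relation_tridiagonal_ordering[OF assms(1-4)] assms(6-8) irreducible_pair_swap
    by blast+
  then show ?thesis
    unfolding TD_pair_def using assms(6-8) by blast
qed

end
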